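(* Let $u$ be a weight on $\mathbb R$ with $u\notin L^1(\mathbb R)$ and $w$ a weight on $(0,\infty)$ with $w\notin L^1(0,\infty)$ and $w\in\Delta_2$. Then $u\in A_\infty$ and $w\in B^*_\infty$ if and only if for every $\varepsilon>0$ there exists $0<\eta<1$ such that $$W(u(S))\le\varepsilon W(u(I))$$ for every interval $I\subset\mathbb R$ and every measurable set $S\subseteq I$ with $|S|\le\eta|I|$.
   Context: A weight $u$ on $\mathbb R$ is locally integrable with $u>0$ a.e.; $u(E)=\int_Eu$. A weight $w$ on $(0,\infty)$ is nonnegative locally integrable, $W(t)=\int_0^tw$. $w\in\Delta_2$: $W(2r)\le CW(r)$ for all $r>0$. $u\in A_\infty$: there exist $C>0$, $\delta\in(0,1)$ with $u(E)/u(I)\le C(|E|/|I|)^\delta$ for all intervals $I$ and measurable $E\subset I$. $w\in B^*_\infty$: $\int_0^r\frac{W(t)}{t}\,dt\le CW(r)$ for all $r>0$. *)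

theory Defs
  imports "HOL-Analysis.Analysis"
begin

definition umeas :: "(real \<Rightarrow> real) \<Rightarrow> real set \<Rightarrow> real" where
  "umeas u E = set_lebesgue_integral lebesgue E u"

definition Wfun :: "(real \<Rightarrow> real) \<Rightarrow> real \<Rightarrow> real" where
  "Wfun w t = set_lebesgue_integral lebesgue {0..t} w"

definition weight_R :: "(real \<Rightarrow> real) \<Rightarrow> bool" where
  "weight_R u \<longleftrightarrow> (\<forall>K. compact K \<longrightarrow> set_integrable lebesgue K u)
     \<and> (AE x in lebesgue. u x > 0)"

definition weight_pos :: "(real \<Rightarrow> real) \<Rightarrow> bool" where
  "weight_pos w \<longleftrightarrow> (\<forall>x>0. w x \<ge> 0)
     \<and> (\<forall>t>0. set_integrable lebesgue {0..t} w)"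

definition Delta2 :: "(real \<Rightarrow> real) \<Rightarrow> bool" where
  "Delta2 w \<longleftrightarrow> (\<exists>C. \<forall>r>0. Wfun w (2*r) \<le> C * Wfun w r)"

definition A_infty :: "(real \<Rightarrow> real) \<Rightarrow> bool" where
  "A_infty u \<longleftrightarrow> (\<exists>C>0. \<exists>\<delta>. 0 < \<delta> \<and> \<delta> < 1 \<and>
     (\<forall>a b E. a < b \<longrightarrow> E \<in> sets lebesgue \<longrightarrow> E \<subseteq> {a..b} \<longrightarrow>
        umeas u E / umeas u {a..b} \<le> C * (measure lebesgue E / (b - a)) powr \<delta>))"

definition B_star_infty :: "(real \<Rightarrow> real) \<Rightarrow> bool" where
  "B_star_infty w \<longleftrightarrow> (\<exists>C. \<forall>r>0.
     (\<integral>\<^sup>+ t\<in>{0<..r}. ennreal (Wfun w t / t) \<partial>lebesgue) \<le> ennreal (C * Wfun w r))"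

end

(*
  If A_infty u and B*_infty w hold, the B*_infty integral bounds W c * ln (r / c) by a multiple of
  W r, so W (rho * r) <= eps * W r for a small rho; A_infty gives u(S) <= rho * u(I) once
  |S| <= eta * |I|, and W is increasing.

  Conversely, since w is not integrable and w is in Delta_2, W is positive with a doubling
  constant D, and the condition with eps = 1 / (2 * D) forces u(S) <= u(I) / 2 whenever
  |S| <= eta * |I|. Iterating this along the Calderon-Zygmund cells of relatively open covers
  gives u(E) <= 2^-k * u(I) when |E| < (eta / 2)^k * |I|, which is A_infty. Since u is not
  integrable, every t > 0 is u(I) for some interval I; one of N >= 1 / eta equal subintervals of
  I carries mass at least t / N, so the condition with eps = 1 / 2 gives W (t / N) <= W t / 2,
  and this geometric decay of W yields B*_infty.
*)
theory Submission
  imports Defs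
begin

definition weight_measure :: "(real \<Rightarrow> real) \<Rightarrow> real measure" where
  "weight_measure u = density lebesgue (\<lambda>x. ennreal (u x))"

lemma sets_weight_measure [simp, measurable_cong]: "sets (weight_measure u) = sets lebesgue"
  by (simp add: weight_measure_def)

lemma weight_R_borel_measurable:
  assumes "weight_R u"
  shows "u \<in> borel_measurable lebesgue"
proof (rule borel_measurable_LIMSEQ_real)
  fix n :: nat
  have "set_integrable lebesgue {-real n..real n} u"
    using assms by (simp add: weight_R_def)
  then show "(\<lambda>x. indicator {-real n..real n} x *\<^sub>R u x) \<in> borel_measurable lebesgue"
    by (simp add: set_integrable_def)
next
  fix x
  obtain N where "\<bar>x\<bar> \<le> real N"
    using real_arch_simple by blast
  then have "\<forall>\<^sub>F n in sequentially. indicator {-real n..real n} x *\<^sub>R u x = u x"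
    unfolding eventually_sequentially by (intro exI[of _ N]) (auto simp: indicator_def)
  then show "(\<lambda>n. indicator {-real n..real n} x *\<^sub>R u x) \<longlonglongrightarrow> u x"
    by (simp add: tendsto_eventually)
qed

lemma weight_R_set_integrable:
  assumes "weight_R u" "E \<in> sets lebesgue" "E \<subseteq> {a..b}"
  shows "set_integrable lebesgue E u"
  using assms set_integrable_subset[of lebesgue "{a..b}" u E] by (simp add: weight_R_def)

lemma umeas_nonneg:
  assumes "weight_R u"
  shows "0 \<le> umeas u E"
proof -
  have "AE x in lebesgue. 0 < u x"
    using assms by (simp add: weight_R_def)
  then have "AE x in lebesgue. 0 \<le> indicator E x *\<^sub>R u x"
    by eventually_elim (simp add: indicator_def)
  then show ?thesis
    unfolding umeas_def set_lebesgue_integral_def by (rule integral_nonneg_AE)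
qed

lemma emeasure_weight_measure:
  assumes "weight_R u" "E \<in> sets lebesgue" "E \<subseteq> {a..b}"
  shows "emeasure (weight_measure u) E = ennreal (umeas u E)"
proof -
  have [measurable]: "u \<in> borel_measurable lebesgue"
    using assms(1) by (rule weight_R_borel_measurable)
  have int: "integrable lebesgue (\<lambda>x. indicator E x * u x)"
    using weight_R_set_integrable[OF assms] by (simp add: set_integrable_def)
  have "AE x in lebesgue. 0 < u x"
    using assms(1) by (simp add: weight_R_def)
  then have "AE x in lebesgue. 0 \<le> indicator E x * u x"
    by eventually_elim (simp add: indicator_def)
  then have "(\<integral>\<^sup>+ x. ennreal (indicator E x * u x) \<partial>lebesgue) = ennreal (umeas u E)"
    using nn_integral_eq_integral[OF int] by (simp add: umeas_def set_lebesgue_integral_def)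
  moreover have "emeasure (weight_measure u) E = (\<integral>\<^sup>+ x. ennreal (indicator E x * u x) \<partial>lebesgue)"
    unfolding weight_measure_def using assms(2)
    by (subst emeasure_density) (auto intro!: nn_integral_cong simp: indicator_def)
  ultimately show ?thesis by simp
qed

lemma umeas_mono:
  assumes "weight_R u" "E \<in> sets lebesgue" "F \<in> sets lebesgue" "E \<subseteq> F" "F \<subseteq> {a..b}"
  shows "umeas u E \<le> umeas u F"
proof -
  have "emeasure (weight_measure u) E \<le> emeasure (weight_measure u) F"
    using assms by (intro emeasure_mono) auto
  then show ?thesis
    using assms emeasure_weight_measure[of u E a b] emeasure_weight_measure[of u F a b]
    by (simp add: umeas_nonneg)
qed

lemma umeas_null:
  assumes "weight_R u" "E \<in> null_sets lebesgue"
  shows "umeas u E = 0"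
proof -
  have "AE x in lebesgue. indicator E x *\<^sub>R u x = 0"
    using AE_not_in[OF assms(2)] by eventually_elim simp
  then show ?thesis
    unfolding umeas_def set_lebesgue_integral_def by (rule integral_eq_zero_AE)
qed

lemma umeas_interval_pos:
  assumes "weight_R u" "a < b"
  shows "0 < umeas u {a..b}"
proof (rule ccontr)
  have [measurable]: "u \<in> borel_measurable lebesgue"
    using assms(1) by (rule weight_R_borel_measurable)
  assume "\<not> 0 < umeas u {a..b}"
  then have "umeas u {a..b} = 0"
    using umeas_nonneg[OF assms(1), of "{a..b}"] by simp
  then have "{a..b} \<in> null_sets (weight_measure u)"
    using emeasure_weight_measure[OF assms(1), of "{a..b}" a b] by (simp add: null_sets_def)
  then have "AE x in lebesgue. x \<in> {a..b} \<longrightarrow> ennreal (u x) = 0"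
    unfolding weight_measure_def by (subst (asm) null_sets_density_iff) auto
  moreover have "AE x in lebesgue. 0 < u x"
    using assms(1) by (simp add: weight_R_def)
  ultimately have "AE x in lebesgue. x \<notin> {a..b}"
    by eventually_elim auto
  then have "{a..b} \<in> null_sets lebesgue"
    by (simp add: AE_iff_null_sets)
  then show False
    using assms(2) by auto
qed

lemma umeas_interval_eq_integral:
  assumes "weight_R u"
  shows "umeas u {a..b} = integral {a..b} u" and "u integrable_on {a..b}"
  using assms set_lebesgue_integral_eq_integral[of "{a..b}" u]
  by (auto simp: weight_R_def umeas_def)

lemma umeas_interval_add:
  assumes "weight_R u" "c \<le> d" "d \<le> e"
  shows "umeas u {c..e} = umeas u {c..d} + umeas u {d..e}"
  using assms umeas_interval_eq_integral[OF assms(1)]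
  by (simp add: Henstock_Kurzweil_Integration.integral_combine)

section \<open>The primitive W\<close>

lemma Wfun_eq_0_if_nonpos:
  assumes "t \<le> 0"
  shows "Wfun w t = 0"
proof -
  have "{0..t} \<in> null_sets lebesgue"
    using assms by (cases "t = 0") auto
  from AE_not_in[OF this] have "AE x in lebesgue. indicator {0..t} x *\<^sub>R w x = 0"
    by eventually_elim simp
  then show ?thesis
    unfolding Wfun_def set_lebesgue_integral_def by (rule integral_eq_zero_AE)
qed

lemma weight_pos_AE_nonneg:
  assumes "weight_pos w"
  shows "AE x in lebesgue. 0 \<le> indicator {0..t} x * w x"
proof -
  have "AE x in lebesgue. x \<noteq> 0"
    using AE_not_in[of "{0}" lebesgue] by simp
  then show ?thesis
    by eventually_elim (use assms in \<open>auto simp: indicator_def weight_pos_def\<close>)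
qed

lemma Wfun_nonneg:
  assumes "weight_pos w"
  shows "0 \<le> Wfun w t"
  unfolding Wfun_def set_lebesgue_integral_def
  using weight_pos_AE_nonneg[OF assms] by (intro integral_nonneg_AE) simp

lemma Wfun_mono:
  assumes "weight_pos w" "s \<le> t"
  shows "Wfun w s \<le> Wfun w t"
proof (cases "s \<le> 0")
  case True
  then show ?thesis
    using Wfun_eq_0_if_nonpos Wfun_nonneg[OF assms(1)] by simp
next
  case False
  then have "integrable lebesgue (\<lambda>x. indicator {0..r} x * w x)" if "r \<in> {s, t}" for r
    using assms that by (auto simp: weight_pos_def set_integrable_def)
  moreover have "indicator {0..s} x * w x \<le> indicator {0..t} x * w x" for x
    using False assms by (auto simp: indicator_def weight_pos_def)
  ultimately show ?thesis
    unfolding Wfun_def set_lebesgue_integral_def by (simp add: integral_mono)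
qed

lemma Delta2_Wfun_eq_0:
  assumes "weight_pos w" "Delta2 w" "0 < r" "Wfun w r = 0"
  shows "Wfun w t = 0"
proof -
  obtain C where C: "\<And>r. 0 < r \<Longrightarrow> Wfun w (2 * r) \<le> C * Wfun w r"
    using assms(2) by (auto simp: Delta2_def)
  have doubling: "Wfun w (2 ^ k * r) = 0" for k
  proof (induction k)
    case (Suc k)
    have "Wfun w (2 ^ Suc k * r) \<le> C * Wfun w (2 ^ k * r)"
      using C[of "2 ^ k * r"] assms(3) by (simp add: mult.assoc)
    then show ?case
      using Suc Wfun_nonneg[OF assms(1)] by (simp add: order_antisym)
  qed (use assms(4) in simp)
  obtain k where "t / r < 2 ^ k"
    using real_arch_pow[of 2 "t / r"] by auto
  then have "t \<le> 2 ^ k * r"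
    using assms(3) by (simp add: field_simps)
  then show ?thesis
    using Wfun_mono[OF assms(1)] doubling[of k] Wfun_nonneg[OF assms(1), of t] by force
qed

lemma weight_pos_borel_measurable:
  assumes "weight_pos w"
  shows "(\<lambda>x. indicator {0<..} x * w x) \<in> borel_measurable lebesgue"
proof (rule borel_measurable_LIMSEQ_real)
  fix n :: nat
  have "integrable lebesgue (\<lambda>x. indicator {0..real n + 1} x * w x)"
    using assms by (simp add: weight_pos_def set_integrable_def)
  then show "(\<lambda>x. indicator {0<..} x * (indicator {0..real n + 1} x * w x)) \<in> borel_measurable lebesgue"
    by (intro borel_measurable_times borel_measurable_indicator borel_measurable_integrable) simp_all
next
  fix x :: real
  obtain N :: nat where "x \<le> real N"
    using real_arch_simple by blast
  then have "\<forall>\<^sub>F n in sequentially.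
      indicator {0<..} x * (indicator {0..real n + 1} x * w x) = indicator {0<..} x * w x"
    unfolding eventually_sequentially by (intro exI[of _ N]) (auto simp: indicator_def)
  then show "(\<lambda>n. indicator {0<..} x * (indicator {0..real n + 1} x * w x))
      \<longlonglongrightarrow> indicator {0<..} x * w x"
    by (simp add: tendsto_eventually)
qed

lemma AE_eq_0_if_Wfun_eq_0:
  assumes "weight_pos w" "\<And>t. Wfun w t = 0"
  shows "AE x in lebesgue. indicator {0<..} x * w x = 0"
proof -
  have "AE x in lebesgue. indicator {0..real n + 1} x * w x = 0" for n :: nat
  proof -
    have "integrable lebesgue (\<lambda>x. indicator {0..real n + 1} x * w x)"
      using assms(1) by (simp add: weight_pos_def set_integrable_def)
    then show ?thesis
      using integral_nonneg_eq_0_iff_AE[OF _ weight_pos_AE_nonneg[OF assms(1)]] assms(2)[of "real n + 1"]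
      by (simp add: Wfun_def set_lebesgue_integral_def del: mult_eq_0_iff)
  qed
  then have "AE x in lebesgue. \<forall>n::nat. indicator {0..real n + 1} x * w x = 0"
    by (subst AE_all_countable) blast
  then show ?thesis
  proof eventually_elim
    case (elim x)
    obtain n :: nat where "x \<le> real n"
      using real_arch_simple by blast
    then show ?case
      using elim[rule_format, of n] by (auto simp: indicator_def split: if_splits)
  qed
qed

lemma Wfun_pos:
  assumes "weight_pos w" "\<not> set_integrable lebesgue {0<..} w" "Delta2 w" "0 < r"
  shows "0 < Wfun w r"
proof (rule ccontr)
  assume "\<not> 0 < Wfun w r"
  then have "Wfun w r = 0"
    using Wfun_nonneg[OF assms(1), of r] by simp
  then have "AE x in lebesgue. 0 = indicator {0<..} x * w x"
    using AE_eq_0_if_Wfun_eq_0[OF assms(1) Delta2_Wfun_eq_0[OF assms(1,3,4)]] by auto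
  then have "integrable lebesgue (\<lambda>x. indicator {0<..} x * w x)"
    using integrable_cong_AE_imp[OF integrable_zero weight_pos_borel_measurable[OF assms(1)]] by blast
  then show False
    using assms(2) by (simp add: set_integrable_def)
qed

lemma Delta2_pos_constant:
  assumes "weight_pos w" "\<not> set_integrable lebesgue {0<..} w" "Delta2 w"
  obtains D where "0 < D" "\<And>r. 0 < r \<Longrightarrow> Wfun w (2 * r) \<le> D * Wfun w r"
proof -
  obtain D where D: "\<And>r. 0 < r \<Longrightarrow> Wfun w (2 * r) \<le> D * Wfun w r"
    using assms(3) by (auto simp: Delta2_def)
  have "0 < D * Wfun w 1"
    using D[of 1] Wfun_pos[OF assms, of 2] by simp
  then have "0 < D"
    using Wfun_pos[OF assms, of 1] by (simp add: zero_less_mult_iff)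
  with D show ?thesis
    using that by blast
qed

section \<open>The condition B*_infty\<close>

lemma Wfun_mul_ln_le_nn_integral:
  assumes "weight_pos w" "0 < c" "c \<le> r"
  shows "ennreal (Wfun w c * ln (r / c)) \<le> (\<integral>\<^sup>+ t\<in>{0<..r}. ennreal (Wfun w t / t) \<partial>lebesgue)"
proof -
  have "((\<lambda>t. 1 / t) has_integral (ln r - ln c)) {c..r}"
  proof (rule fundamental_theorem_of_calculus)
    fix x assume "x \<in> {c..r}"
    then have "(ln has_real_derivative 1 / x) (at x within {c..r})"
      using assms(2) by (auto intro!: derivative_eq_intros)
    then show "(ln has_vector_derivative 1 / x) (at x within {c..r})"
      by (simp add: has_real_derivative_iff_has_vector_derivative)
  qed (use assms in auto)
  then have "((\<lambda>t. Wfun w c * (1 / t)) has_integral (Wfun w c * (ln r - ln c))) {c..r}"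
    by (rule has_integral_mult_right)
  then have int: "((\<lambda>t. Wfun w c * (1 / t)) has_integral (Wfun w c * ln (r / c))) {c..r}"
    using assms(2,3) by (simp add: ln_div)
  have "ennreal (Wfun w c * ln (r / c))
      = (\<integral>\<^sup>+ t. ennreal (indicator {c..r} t * (Wfun w c * (1 / t))) \<partial>lborel)"
    by (rule nn_integral_has_integral_lebesgue[OF _ int, symmetric])
      (use assms(2) Wfun_nonneg[OF assms(1)] in auto)
  also have "\<dots> = (\<integral>\<^sup>+ t. ennreal (indicator {c..r} t * (Wfun w c * (1 / t))) \<partial>lebesgue)"
    by (simp add: nn_integral_completion)
  also have "\<dots> \<le> (\<integral>\<^sup>+ t\<in>{0<..r}. ennreal (Wfun w t / t) \<partial>lebesgue)"
  proof (rule nn_integral_mono)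
    fix t
    have "Wfun w c / t \<le> Wfun w t / t" if "c \<le> t"
      using Wfun_mono[OF assms(1) that] that assms(2) by (simp add: divide_right_mono)
    then show "ennreal (indicator {c..r} t * (Wfun w c * (1 / t)))
        \<le> ennreal (Wfun w t / t) * indicator {0<..r} t"
      using assms(2) by (auto simp: indicator_def intro: ennreal_leI)
  qed
  finally show ?thesis .
qed

lemma B_star_infty_log_bound:
  assumes "weight_pos w" "B_star_infty w"
  obtains K where "0 \<le> K" "\<And>c r. 0 < c \<Longrightarrow> c \<le> r \<Longrightarrow> Wfun w c * ln (r / c) \<le> K * Wfun w r"
proof -
  obtain C where C: "\<And>r. 0 < r \<Longrightarrow>
      (\<integral>\<^sup>+ t\<in>{0<..r}. ennreal (Wfun w t / t) \<partial>lebesgue) \<le> ennreal (C * Wfun w r)"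
    using assms(2) by (auto simp: B_star_infty_def)
  have "Wfun w c * ln (r / c) \<le> max 0 C * Wfun w r" if cr: "0 < c" "c \<le> r" for c r
  proof -
    have "ennreal (Wfun w c * ln (r / c)) \<le> ennreal (C * Wfun w r)"
      using Wfun_mul_ln_le_nn_integral[OF assms(1) cr] C[of r] cr by simp
    moreover have "0 \<le> Wfun w c * ln (r / c)"
      using Wfun_nonneg[OF assms(1)] cr by simp
    ultimately have "Wfun w c * ln (r / c) \<le> max 0 (C * Wfun w r)"
      by (auto simp: ennreal_le_iff2)
    also have "\<dots> \<le> max 0 C * Wfun w r"
      using Wfun_nonneg[OF assms(1), of r] by (simp add: mult_right_mono)
    finally show ?thesis .
  qed
  then show ?thesis
    using that[of "max 0 C"] by simp
qed

lemma B_star_infty_Wfun_small_fraction: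
  assumes "weight_pos w" "B_star_infty w" "0 < \<epsilon>"
  obtains \<rho> where "0 < \<rho>" "\<And>r. 0 < r \<Longrightarrow> Wfun w (\<rho> * r) \<le> \<epsilon> * Wfun w r"
proof -
  obtain K where K: "0 \<le> K" "\<And>c r. 0 < c \<Longrightarrow> c \<le> r \<Longrightarrow> Wfun w c * ln (r / c) \<le> K * Wfun w r"
    using B_star_infty_log_bound[OF assms(1,2)] by blast
  define \<rho> where "\<rho> = exp (- ((K + 1) / \<epsilon>))"
  have "0 < \<rho>" "\<rho> \<le> 1"
    using K(1) assms(3) by (simp_all add: \<rho>_def)
  have "Wfun w (\<rho> * r) \<le> \<epsilon> * Wfun w r" if "0 < r" for r
  proof -
    have "ln (r / (\<rho> * r)) = (K + 1) / \<epsilon>"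
      using that \<open>0 < \<rho>\<close> by (simp add: \<rho>_def ln_div)
    then have "Wfun w (\<rho> * r) * ((K + 1) / \<epsilon>) \<le> K * Wfun w r"
      using K(2)[of "\<rho> * r" r] that \<open>0 < \<rho>\<close> \<open>\<rho> \<le> 1\<close> by (simp add: mult_left_le_one_le)
    also have "\<dots> \<le> (K + 1) * Wfun w r"
      using Wfun_nonneg[OF assms(1), of r] by (simp add: mult_right_mono)
    finally have "(K + 1) * Wfun w (\<rho> * r) \<le> (K + 1) * (\<epsilon> * Wfun w r)"
      using assms(3) by (simp add: divide_le_eq ac_simps)
    then show ?thesis
      using K(1) by simp
  qed
  with \<open>0 < \<rho>\<close> show ?thesis
    using that by blast
qed

lemma powr_halving_exponent:
  fixes \<theta> :: real
  assumes "0 < \<theta>" "\<theta> < 1"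
  shows "(\<theta> ^ k) powr (ln 2 / ln (1 / \<theta>)) = (1 / 2) ^ k"
proof -
  have "(\<theta> ^ k) powr (ln 2 / ln (1 / \<theta>)) = (\<theta> powr (ln 2 / ln (1 / \<theta>))) ^ k"
    using assms by (simp add: powr_realpow[symmetric] powr_powr powr_power ac_simps)
  also have "\<theta> powr (ln 2 / ln (1 / \<theta>)) = 1 / 2"
    using assms by (simp add: powr_def ln_div exp_minus)
  finally show ?thesis .
qed

lemma power_bracket:
  fixes \<theta> x :: real
  assumes "0 < \<theta>" "\<theta> < 1" "0 < x" "x < 1"
  obtains k where "\<theta> ^ Suc k \<le> x" "x < \<theta> ^ k"
proof -
  obtain n where "\<theta> ^ n < x"
    using real_arch_pow_inv[OF assms(3,2)] by blast
  moreover have "\<theta> ^ Suc n \<le> \<theta> ^ n"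
    using assms(1,2) by (intro power_decreasing) auto
  ultimately have ex: "\<exists>k. \<theta> ^ Suc k \<le> x"
    by (intro exI[of _ n]) simp
  define k where "k = (LEAST k. \<theta> ^ Suc k \<le> x)"
  have "\<theta> ^ Suc k \<le> x"
    unfolding k_def by (rule LeastI_ex[OF ex])
  moreover have "x < \<theta> ^ k"
  proof (cases k)
    case (Suc j)
    then show ?thesis
      using not_less_Least[of j "\<lambda>k. \<theta> ^ Suc k \<le> x"] by (simp add: k_def not_le)
  qed (use assms(4) in simp)
  ultimately show ?thesis
    using that by blast
qed

lemma Wfun_power_bound_if_halving:
  assumes "weight_pos w" "0 < \<theta>" "\<theta> < 1"
    and halving: "\<And>t. 0 < t \<Longrightarrow> Wfun w (\<theta> * t) \<le> Wfun w t / 2"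
    and "0 < s" "s \<le> r"
  shows "Wfun w s \<le> 2 * (s / r) powr (ln 2 / ln (1 / \<theta>)) * Wfun w r"
proof (cases "s = r")
  case True
  then show ?thesis
    using assms(5) Wfun_nonneg[OF assms(1), of r] by simp
next
  case False
  define \<alpha> where "\<alpha> = ln 2 / ln (1 / \<theta>)"
  have iterate: "Wfun w (\<theta> ^ k * r) \<le> (1 / 2) ^ k * Wfun w r" for k
  proof (induction k)
    case (Suc k)
    have "Wfun w (\<theta> ^ Suc k * r) \<le> Wfun w (\<theta> ^ k * r) / 2"
      using halving[of "\<theta> ^ k * r"] assms(2,5,6) by (simp add: mult.assoc)
    then show ?case
      using Suc by simp
  qed simp
  obtain k where k: "\<theta> ^ Suc k \<le> s / r" "s / r < \<theta> ^ k"
    using power_bracket[OF assms(2,3), of "s / r"] assms(5,6) False by auto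
  have "Wfun w s \<le> Wfun w (\<theta> ^ k * r)"
    using k(2) assms(5,6) by (intro Wfun_mono[OF assms(1)]) (simp add: field_simps)
  also have "\<dots> \<le> (1 / 2) ^ k * Wfun w r"
    by (rule iterate)
  also have "\<dots> = 2 * (\<theta> ^ Suc k) powr \<alpha> * Wfun w r"
    unfolding \<alpha>_def powr_halving_exponent[OF assms(2,3)] by simp
  also have "\<dots> \<le> 2 * (s / r) powr \<alpha> * Wfun w r"
    using k(1) assms(2,3) Wfun_nonneg[OF assms(1), of r]
    by (intro mult_right_mono mult_left_mono powr_mono2) (auto simp: \<alpha>_def)
  finally show ?thesis
    by (simp add: \<alpha>_def)
qed

lemma B_star_infty_if_power_bound:
  assumes "weight_pos w" "0 < \<alpha>" "0 \<le> C"
    and bound: "\<And>s r. 0 < s \<Longrightarrow> s \<le> r \<Longrightarrow> Wfun w s \<le> C * (s / r) powr \<alpha> * Wfun w r"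
  shows "B_star_infty w"
  unfolding B_star_infty_def
proof (intro exI[of _ "C / \<alpha>"] allI impI)
  fix r :: real assume "0 < r"
  define K where "K = C * Wfun w r / r powr \<alpha>"
  have "0 \<le> K"
    using assms(3) Wfun_nonneg[OF assms(1)] by (simp add: K_def)
  have "((\<lambda>t. t powr (\<alpha> - 1)) has_integral (r powr (\<alpha> - 1 + 1) / (\<alpha> - 1 + 1))) {0..r}"
    using assms(2) \<open>0 < r\<close> by (intro has_integral_powr_from_0) auto
  then have "((\<lambda>t. K * t powr (\<alpha> - 1)) has_integral (K * (r powr (\<alpha> - 1 + 1) / (\<alpha> - 1 + 1)))) {0..r}"
    by (rule has_integral_mult_right)
  moreover have "K * (r powr (\<alpha> - 1 + 1) / (\<alpha> - 1 + 1)) = C / \<alpha> * Wfun w r"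
    using \<open>0 < r\<close> by (simp add: K_def)
  ultimately have int: "((\<lambda>t. K * t powr (\<alpha> - 1)) has_integral (C / \<alpha> * Wfun w r)) {0..r}"
    by metis
  have "(\<integral>\<^sup>+ t\<in>{0<..r}. ennreal (Wfun w t / t) \<partial>lebesgue)
      \<le> (\<integral>\<^sup>+ t. ennreal (indicator {0..r} t * (K * t powr (\<alpha> - 1))) \<partial>lebesgue)"
  proof (rule nn_integral_mono)
    fix t
    have "Wfun w t / t \<le> K * t powr (\<alpha> - 1)" if "0 < t" "t \<le> r"
    proof -
      have "Wfun w t / t \<le> C * (t / r) powr \<alpha> * Wfun w r / t"
        using bound[OF that] that by (simp add: divide_right_mono)
      also have "\<dots> = K * t powr (\<alpha> - 1)"
      proof -
        have "(t / r) powr \<alpha> = t powr \<alpha> / r powr \<alpha>" "t powr (\<alpha> - 1) = t powr \<alpha> / t"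
          using that \<open>0 < r\<close> by (simp_all add: powr_divide powr_diff)
        then show ?thesis
          unfolding K_def by simp
      qed
      finally show ?thesis .
    qed
    then show "ennreal (Wfun w t / t) * indicator {0<..r} t
        \<le> ennreal (indicator {0..r} t * (K * t powr (\<alpha> - 1)))"
      by (auto simp: indicator_def intro: ennreal_leI)
  qed
  also have "\<dots> = (\<integral>\<^sup>+ t. ennreal (indicator {0..r} t * (K * t powr (\<alpha> - 1))) \<partial>lborel)"
    by (simp add: nn_integral_completion)
  also have "\<dots> = ennreal (C / \<alpha> * Wfun w r)"
    by (rule nn_integral_has_integral_lebesgue[OF _ int]) (use \<open>0 \<le> K\<close> in auto)
  finally show "(\<integral>\<^sup>+ t\<in>{0<..r}. ennreal (Wfun w t / t) \<partial>lebesgue) \<le> ennreal (C / \<alpha> * Wfun w r)" .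
qed

section \<open>Small subsets of intervals\<close>

(* Phi = Wfun w gives the condition of the theorem, Phi = id the A_infty-type conditions. *)
definition small_sets_bound :: "(real \<Rightarrow> real) \<Rightarrow> (real \<Rightarrow> real) \<Rightarrow> real \<Rightarrow> real \<Rightarrow> bool" where
  "small_sets_bound \<Phi> u \<eta> c \<longleftrightarrow> (\<forall>a b S. a < b \<longrightarrow> S \<in> sets lebesgue \<longrightarrow> S \<subseteq> {a..b} \<longrightarrow>
     measure lebesgue S \<le> \<eta> * (b - a) \<longrightarrow> \<Phi> (umeas u S) \<le> c * \<Phi> (umeas u {a..b}))"

lemma small_sets_boundD:
  assumes "small_sets_bound \<Phi> u \<eta> c" "a < b" "S \<in> sets lebesgue" "S \<subseteq> {a..b}"
    "measure lebesgue S \<le> \<eta> * (b - a)"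
  shows "\<Phi> (umeas u S) \<le> c * \<Phi> (umeas u {a..b})"
  using assms by (auto simp: small_sets_bound_def)

lemma A_infty_imp_small_sets_bound:
  assumes "weight_R u" "A_infty u" "0 < c"
  obtains \<eta> where "0 < \<eta>" "\<eta> < 1" "small_sets_bound (\<lambda>t. t) u \<eta> c"
proof -
  obtain C \<delta> where C: "0 < C" "0 < \<delta>" and
    A: "\<And>a b E. a < b \<Longrightarrow> E \<in> sets lebesgue \<Longrightarrow> E \<subseteq> {a..b} \<Longrightarrow>
        umeas u E / umeas u {a..b} \<le> C * (measure lebesgue E / (b - a)) powr \<delta>"
    using assms(2) unfolding A_infty_def by blast
  define \<eta> where "\<eta> = min (1 / 2) ((c / C) powr (1 / \<delta>))"
  have "0 < \<eta>" "\<eta> < 1"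
    using assms(3) C by (auto simp: \<eta>_def)
  have "C * \<eta> powr \<delta> \<le> c"
  proof -
    have "\<eta> powr \<delta> \<le> ((c / C) powr (1 / \<delta>)) powr \<delta>"
      using \<open>0 < \<eta>\<close> C by (intro powr_mono2) (auto simp: \<eta>_def)
    also have "\<dots> = c / C"
      using assms(3) C by (simp add: powr_powr)
    finally show ?thesis
      using C by (simp add: field_simps)
  qed
  have "small_sets_bound (\<lambda>t. t) u \<eta> c"
    unfolding small_sets_bound_def
  proof (intro allI impI)
    fix a b S assume ab: "a < b" and S: "S \<in> sets lebesgue" "S \<subseteq> {a..b}"
      and small: "measure lebesgue S \<le> \<eta> * (b - a)"
    have "umeas u S / umeas u {a..b} \<le> C * (measure lebesgue S / (b - a)) powr \<delta>"
      by (rule A[OF ab S])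
    also have "\<dots> \<le> C * \<eta> powr \<delta>"
      using small ab C by (intro mult_left_mono powr_mono2) (auto simp: field_simps)
    also have "\<dots> \<le> c"
      by fact
    finally show "umeas u S \<le> c * umeas u {a..b}"
      using umeas_interval_pos[OF assms(1) ab] by (simp add: divide_le_eq)
  qed
  then show ?thesis
    using that \<open>0 < \<eta>\<close> \<open>\<eta> < 1\<close> by blast
qed

lemma small_sets_bound_half_if_doubling:
  assumes "weight_R u" "weight_pos w" "0 < D"
    and doubling: "\<And>r. 0 < r \<Longrightarrow> Wfun w (2 * r) \<le> D * Wfun w r"
    and pos: "\<And>r. 0 < r \<Longrightarrow> 0 < Wfun w r"
    and bound: "small_sets_bound (Wfun w) u \<eta> (1 / (2 * D))"
  shows "small_sets_bound (\<lambda>t. t) u \<eta> (1 / 2)"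
  unfolding small_sets_bound_def
proof (intro allI impI)
  fix a b S assume ab: "a < b" and S: "S \<in> sets lebesgue" "S \<subseteq> {a..b}"
    and small: "measure lebesgue S \<le> \<eta> * (b - a)"
  define t where "t = umeas u {a..b}"
  have "0 < t"
    unfolding t_def using assms(1) ab by (rule umeas_interval_pos)
  show "umeas u S \<le> 1 / 2 * umeas u {a..b}"
  proof (rule ccontr)
    assume "\<not> ?thesis"
    then have "Wfun w (t / 2) \<le> Wfun w (umeas u S)"
      by (intro Wfun_mono[OF assms(2)]) (simp add: t_def)
    also have "\<dots> \<le> 1 / (2 * D) * Wfun w t"
      unfolding t_def by (rule small_sets_boundD[OF bound ab S small])
    finally have "D * Wfun w (t / 2) \<le> Wfun w t / 2"
      using \<open>0 < D\<close> by (simp add: field_simps)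
    moreover have "Wfun w t \<le> D * Wfun w (t / 2)"
      using doubling[of "t / 2"] \<open>0 < t\<close> by simp
    ultimately show False
      using pos[OF \<open>0 < t\<close>] by simp
  qed
qed

section \<open>Intervals of prescribed weight\<close>

lemma integrable_if_emeasure_weight_measure_finite:
  assumes "weight_R u" "emeasure (weight_measure u) UNIV < \<infinity>"
  shows "integrable lebesgue u"
proof (rule integrableI_bounded)
  show [measurable]: "u \<in> borel_measurable lebesgue"
    using assms(1) by (rule weight_R_borel_measurable)
  have "AE x in lebesgue. ennreal (u x) = ennreal (norm (u x))"
    using assms(1) unfolding weight_R_def by (auto elim: AE_mp)
  then have "(\<integral>\<^sup>+ x. ennreal (u x) \<partial>lebesgue) = (\<integral>\<^sup>+ x. ennreal (norm (u x)) \<partial>lebesgue)"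
    by (rule nn_integral_cong_AE)
  then show "(\<integral>\<^sup>+ x. ennreal (norm (u x)) \<partial>lebesgue) < \<infinity>"
    using assms(2) by (simp add: weight_measure_def emeasure_density)
qed

lemma umeas_unbounded_if_not_integrable:
  assumes "weight_R u" "\<not> integrable lebesgue u"
  obtains n :: nat where "t \<le> umeas u {-real n..real n}"
proof -
  have "\<exists>n. t \<le> umeas u {-real n..real n}"
  proof (rule ccontr)
    assume "\<nexists>n. t \<le> umeas u {-real n..real n}"
    then have "umeas u {-real n..real n} \<le> t" for n
      by (meson linorder_linear)
    then have "emeasure (weight_measure u) {-real n..real n} \<le> ennreal t" for n
      using emeasure_weight_measure[OF assms(1), of "{-real n..real n}" "-real n" "real n"]
      by (simp add: ennreal_leI)
    then have "(SUP n. emeasure (weight_measure u) {-real n..real n}) \<le> ennreal t"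
      by (rule SUP_least)
    moreover have "(\<Union>n. {-real n..real n}) = UNIV"
    proof -
      have "x \<in> (\<Union>n. {-real n..real n})" for x
      proof -
        obtain n where "\<bar>x\<bar> \<le> real n"
          using real_arch_simple by blast
        then have "x \<in> {-real n..real n}"
          by auto
        then show ?thesis
          by blast
      qed
      then show ?thesis
        by auto
    qed
    moreover have "incseq (\<lambda>n. {-real n..real n})"
      by (auto simp: incseq_def)
    ultimately have "emeasure (weight_measure u) UNIV \<le> ennreal t"
      using SUP_emeasure_incseq[of "\<lambda>n. {-real n..real n}" "weight_measure u"] by force
    then have "emeasure (weight_measure u) UNIV < \<infinity>"
      using ennreal_less_top[of t] unfolding infinity_ennreal_def by (rule le_less_trans)
    with assms show False
      using integrable_if_emeasure_weight_measure_finite by blast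
  qed
  then show ?thesis
    using that by blast
qed

lemma continuous_on_umeas_symmetric_interval:
  assumes "weight_R u"
  shows "continuous_on {0..R} (\<lambda>s. umeas u {-s..s})"
proof (rule continuous_on_eq)
  have int: "u integrable_on {-R..R}"
    using umeas_interval_eq_integral(2)[OF assms] .
  have "continuous_on {-R..0} (\<lambda>x. integral {x..0} u)"
    using int by (intro indefinite_integral_continuous_1' integrable_on_subinterval) auto
  then have "continuous_on {0..R} (\<lambda>s. integral {-s..0} u)"
    by (rule continuous_on_compose2[where f = uminus]) (auto intro: continuous_intros)
  moreover have "continuous_on {0..R} (\<lambda>s. integral {0..s} u)"
    using int by (intro indefinite_integral_continuous_1 integrable_on_subinterval) auto
  ultimately show "continuous_on {0..R} (\<lambda>s. integral {-s..0} u + integral {0..s} u)"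
    by (rule continuous_on_add)
  fix s :: real assume "s \<in> {0..R}"
  then show "integral {-s..0} u + integral {0..s} u = umeas u {-s..s}"
    using umeas_interval_add[OF assms, of "-s" 0 s] umeas_interval_eq_integral(1)[OF assms]
    by simp
qed

lemma umeas_interval_surj:
  assumes "weight_R u" "\<not> integrable lebesgue u" "0 < t"
  obtains a b where "a < b" "umeas u {a..b} = t"
proof -
  obtain n :: nat where n: "t \<le> umeas u {-real n..real n}"
    using umeas_unbounded_if_not_integrable[OF assms(1,2)] by blast
  have "umeas u {-0..0} = 0"
    using umeas_null[OF assms(1), of "{0}"] by simp
  then obtain s where s: "0 \<le> s" "s \<le> real n" "umeas u {-s..s} = t"
    using IVT'[of "\<lambda>s. umeas u {-s..s}" 0 t "real n"] n assms(3)
      continuous_on_umeas_symmetric_interval[OF assms(1)] by auto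
  moreover have "s \<noteq> 0"
    using s(3) assms(3) \<open>umeas u {-0..0} = 0\<close> by auto
  ultimately show ?thesis
    using that[of "-s" s] by simp
qed

lemma exists_subinterval_umeas_ge:
  fixes N :: nat
  assumes "weight_R u" "a < b" "0 < N"
  obtains c where "a \<le> c" "c + (b - a) / N \<le> b" "umeas u {a..b} / N \<le> umeas u {c..c + (b - a) / N}"
proof -
  define p where "p i = a + real i * (b - a) / N" for i :: nat
  define f where "f i = umeas u {p i..p (Suc i)}" for i
  have step: "p (Suc i) = p i + (b - a) / N" for i
    using assms(3) by (simp add: p_def field_simps)
  have "0 \<le> real i * (b - a) / N" for i
    using assms(2,3) by simp
  then have "a \<le> p i" for i
    by (simp add: p_def)
  moreover have "p i \<le> p (Suc i)" for i
    using assms(2,3) by (simp add: step)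
  ultimately have "(\<Sum>i<m. f i) = umeas u {a..p m}" for m
  proof (induction m)
    case 0
    show ?case
      using umeas_null[OF assms(1), of "{a}"] by (simp add: p_def)
  next
    case (Suc m)
    then show ?case
      using umeas_interval_add[OF assms(1), of a "p m" "p (Suc m)"] by (simp add: f_def)
  qed
  then have sum: "(\<Sum>i<N. f i) = umeas u {a..b}"
    using assms(3) by (simp add: p_def)
  have "Max (f ` {..<N}) \<in> f ` {..<N}"
    using assms(3) by (intro Max_in) auto
  then obtain i where i: "i < N" "f i = Max (f ` {..<N})"
    by (metis imageE lessThan_iff)
  have "umeas u {a..b} \<le> of_nat (card {..<N}) * f i"
    unfolding sum[symmetric] using i by (intro sum_bounded_above) simp
  then have "umeas u {a..b} / N \<le> f i"
    using assms(3) by (simp add: divide_le_eq mult.commute)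
  moreover have "p (Suc i) \<le> b"
  proof -
    have "real (Suc i) * (b - a) / N \<le> real N * (b - a) / N"
      using i(1) assms(2) by (intro divide_right_mono mult_right_mono) auto
    then show ?thesis
      using assms(3) by (simp add: p_def)
  qed
  ultimately show ?thesis
    using that[of "p i"] \<open>\<And>i. a \<le> p i\<close> by (simp add: f_def step)
qed

lemma Wfun_halving_if_small_sets_bound:
  assumes "weight_R u" "\<not> integrable lebesgue u" "weight_pos w" "0 < \<eta>" "\<eta> < 1"
    and bound: "small_sets_bound (Wfun w) u \<eta> (1 / 2)"
  obtains \<theta> where "0 < \<theta>" "\<theta> < 1" "\<And>t. 0 < t \<Longrightarrow> Wfun w (\<theta> * t) \<le> Wfun w t / 2"
proof -
  define N where "N = nat \<lceil>1 / \<eta>\<rceil>"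
  have "1 / \<eta> \<le> real N" "1 < 1 / \<eta>"
    using assms(4,5) by (simp_all add: N_def)
  then have "1 < real N"
    by linarith
  then have "1 / real N \<le> \<eta>"
    using \<open>1 / \<eta> \<le> real N\<close> assms(4) by (simp add: field_simps)
  have "Wfun w (1 / N * t) \<le> Wfun w t / 2" if t: "0 < t" for t
  proof -
    obtain a b where ab: "a < b" "umeas u {a..b} = t"
      using umeas_interval_surj[OF assms(1,2) t] by blast
    obtain c where c: "a \<le> c" "c + (b - a) / N \<le> b" "t / N \<le> umeas u {c..c + (b - a) / N}"
      using exists_subinterval_umeas_ge[OF assms(1) ab(1), of N] ab(2) \<open>1 < real N\<close> by auto
    have "measure lebesgue {c..c + (b - a) / N} = (b - a) * (1 / N)"
      using ab(1) \<open>1 < real N\<close> by simp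
    also have "\<dots> \<le> (b - a) * \<eta>"
      using \<open>1 / real N \<le> \<eta>\<close> ab(1) by (intro mult_left_mono) auto
    finally have "Wfun w (umeas u {c..c + (b - a) / N}) \<le> 1 / 2 * Wfun w t"
      using small_sets_boundD[OF bound ab(1), of "{c..c + (b - a) / N}"] c(1,2) ab(2)
      by (simp add: mult.commute)
    moreover have "Wfun w (1 / N * t) \<le> Wfun w (umeas u {c..c + (b - a) / N})"
      using c(3) by (intro Wfun_mono[OF assms(3)]) simp
    ultimately show ?thesis
      by simp
  qed
  then show ?thesis
    using that[of "1 / N"] \<open>1 < real N\<close> by simp
qed

section \<open>Dyadic cells and Calderon-Zygmund cells\<close>

(* The cell containing x among the 2^n half-open intervals of equal length that partition [a, b). *)
definition dyadic_cell :: "real \<Rightarrow> real \<Rightarrow> nat \<Rightarrow> real \<Rightarrow> real set" where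
  "dyadic_cell a b n x = {y. \<lfloor>(y - a) / ((b - a) / 2 ^ n)\<rfloor> = \<lfloor>(x - a) / ((b - a) / 2 ^ n)\<rfloor>}"

lemma mem_dyadic_cell [simp]: "x \<in> dyadic_cell a b n x"
  by (simp add: dyadic_cell_def)

lemma dyadic_cell_cong: "y \<in> dyadic_cell a b n x \<Longrightarrow> dyadic_cell a b n y = dyadic_cell a b n x"
  by (simp add: dyadic_cell_def)

lemma dyadic_cell_eq_interval:
  fixes a b x :: real and n :: nat
  assumes "a < b"
  defines "h \<equiv> (b - a) / 2 ^ n"
  defines "l \<equiv> a + of_int \<lfloor>(x - a) / ((b - a) / 2 ^ n)\<rfloor> * h"
  shows "dyadic_cell a b n x = {l..<l + h}"
proof -
  define k :: real where "k = of_int \<lfloor>(x - a) / ((b - a) / 2 ^ n)\<rfloor>"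
  have "0 < h"
    using assms(1) by (simp add: h_def)
  have "y \<in> dyadic_cell a b n x \<longleftrightarrow> y \<in> {l..<l + h}" for y
  proof -
    have "y \<in> dyadic_cell a b n x \<longleftrightarrow> k \<le> (y - a) / h \<and> (y - a) / h < k + 1"
      by (simp add: dyadic_cell_def k_def h_def floor_eq_iff)
    also have "\<dots> \<longleftrightarrow> k * h \<le> y - a \<and> y - a < (k + 1) * h"
      using \<open>0 < h\<close> by (simp add: pos_le_divide_eq pos_divide_less_eq)
    finally show ?thesis
      by (auto simp: l_def k_def algebra_simps)
  qed
  then show ?thesis
    by blast
qed

lemma dyadic_cell_in_sets [measurable]: "a < b \<Longrightarrow> dyadic_cell a b n x \<in> sets lebesgue"
  by (simp add: dyadic_cell_eq_interval)

lemma emeasure_dyadic_cell: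
  assumes "a < b"
  shows "emeasure lebesgue (dyadic_cell a b n x) = ennreal ((b - a) / 2 ^ n)"
  using assms by (simp add: dyadic_cell_eq_interval)

lemma dyadic_cell_dist:
  assumes "a < b" "y \<in> dyadic_cell a b n x"
  shows "\<bar>y - x\<bar> < (b - a) / 2 ^ n"
  using assms mem_dyadic_cell[of x a b n]
  unfolding dyadic_cell_eq_interval[OF assms(1)] by (simp add: abs_less_iff)

lemma dyadic_cell_mono:
  assumes "m \<le> n"
  shows "dyadic_cell a b n x \<subseteq> dyadic_cell a b m x"
proof -
  have index: "\<lfloor>(y - a) / ((b - a) / 2 ^ m)\<rfloor> = \<lfloor>(y - a) / ((b - a) / 2 ^ n)\<rfloor> div 2 ^ (n - m)" for y
  proof -
    have "(b - a) / 2 ^ m = (b - a) / 2 ^ n * 2 ^ (n - m)"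
      using assms by (simp add: power_diff)
    then have rescale: "(y - a) / ((b - a) / 2 ^ m) = ((y - a) / ((b - a) / 2 ^ n)) / real_of_int (2 ^ (n - m))"
      by simp
    show ?thesis
      unfolding rescale by (rule floor_divide_real_eq_div) simp
  qed
  show ?thesis
    unfolding dyadic_cell_def index by auto
qed

lemma dyadic_cell_0:
  assumes "x \<in> {a..<b}"
  shows "dyadic_cell a b 0 x = {a..<b}"
proof -
  have "0 < b - a"
    using assms by simp
  have index: "\<lfloor>(y - a) / (b - a)\<rfloor> = 0 \<longleftrightarrow> y \<in> {a..<b}" for y
  proof -
    have "\<lfloor>(y - a) / (b - a)\<rfloor> = 0 \<longleftrightarrow> 0 \<le> (y - a) / (b - a) \<and> (y - a) / (b - a) < 1"
      by (simp add: floor_eq_iff)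
    also have "\<dots> \<longleftrightarrow> y \<in> {a..<b}"
      using \<open>0 < b - a\<close> by (simp add: pos_le_divide_eq pos_divide_less_eq)
    finally show ?thesis .
  qed
  have x0: "\<lfloor>(x - a) / (b - a)\<rfloor> = 0"
    using index assms by blast
  show ?thesis
    unfolding dyadic_cell_def power_0 div_by_1 x0 index by auto
qed

lemma dyadic_cell_subset:
  "x \<in> {a..<b} \<Longrightarrow> dyadic_cell a b n x \<subseteq> {a..<b}"
  using dyadic_cell_mono[of 0 n a b x] dyadic_cell_0[of x a b] by simp

lemma finite_dyadic_cells:
  assumes "a < b"
  shows "finite (dyadic_cell a b n ` {a..<b})"
proof (rule finite_subset)
  define h where "h = (b - a) / 2 ^ n"
  show "dyadic_cell a b n ` {a..<b} \<subseteq> (\<lambda>k. {y. \<lfloor>(y - a) / h\<rfloor> = k}) ` {0..<2 ^ n}"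
  proof
    fix Q assume "Q \<in> dyadic_cell a b n ` {a..<b}"
    then obtain x where x: "x \<in> {a..<b}" "Q = dyadic_cell a b n x"
      by blast
    have "0 \<le> (x - a) / h" "(x - a) / h < 2 ^ n"
      using x(1) assms by (simp_all add: h_def field_simps)
    then have "\<lfloor>(x - a) / h\<rfloor> \<in> {0..<2 ^ n}"
      by (simp add: floor_less_iff)
    then show "Q \<in> (\<lambda>k. {y. \<lfloor>(y - a) / h\<rfloor> = k}) ` {0..<2 ^ n}"
      using x(2) by (auto simp: dyadic_cell_def h_def)
  qed
qed simp

lemma lmeasurable_subset_interval:
  fixes S :: "real set"
  shows "S \<in> sets lebesgue \<Longrightarrow> S \<subseteq> {a..b} \<Longrightarrow> S \<in> lmeasurable"
  by (meson bounded_closed_interval bounded_set_imp_lmeasurable bounded_subset)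

lemma emeasure_Union_scaled_le:
  fixes c :: ennreal and \<Q> :: "'a set set"
  assumes "countable \<Q>" "disjoint \<Q>" "\<Q> \<subseteq> sets M" "sets M' = sets M" "A \<in> sets M" "B \<in> sets M"
    and le: "\<And>Q. Q \<in> \<Q> \<Longrightarrow> c * emeasure M (A \<inter> Q) \<le> emeasure M' (B \<inter> Q)"
  shows "c * emeasure M (A \<inter> \<Union>\<Q>) \<le> emeasure M' (B \<inter> \<Union>\<Q>)"
proof -
  have union: "emeasure M'' (C \<inter> \<Union>\<Q>) = (\<integral>\<^sup>+ Q. emeasure M'' (C \<inter> Q) \<partial>count_space \<Q>)"
    if "sets M'' = sets M" "C \<in> sets M" for M'' C
  proof -
    have "disjoint_family_on (\<lambda>Q. C \<inter> Q) \<Q>"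
      using assms(2) unfolding disjoint_family_on_def disjoint_def by blast
    moreover have "C \<inter> \<Union>\<Q> = (\<Union>Q\<in>\<Q>. C \<inter> Q)"
      by blast
    ultimately show ?thesis
      using emeasure_UN_countable[of \<Q> "\<lambda>Q. C \<inter> Q" M''] assms(1,3) that by auto
  qed
  have "c * emeasure M (A \<inter> \<Union>\<Q>) = (\<integral>\<^sup>+ Q. c * emeasure M (A \<inter> Q) \<partial>count_space \<Q>)"
    using union[OF refl assms(5)] by (simp add: nn_integral_cmult)
  also have "\<dots> \<le> (\<integral>\<^sup>+ Q. emeasure M' (B \<inter> Q) \<partial>count_space \<Q>)"
    using le by (intro nn_integral_mono) simp
  also have "\<dots> = emeasure M' (B \<inter> \<Union>\<Q>)"
    using union[OF assms(4,6)] by simp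
  finally show ?thesis .
qed

(* The maximal dyadic cells of [a, b) in which F has relative density above theta: each x is
   assigned the cell of the first level at which its cell is that dense. *)
definition cz_cells :: "real \<Rightarrow> real \<Rightarrow> real \<Rightarrow> real set \<Rightarrow> real set set" where
  "cz_cells a b \<theta> F = {dyadic_cell a b n x | n x. x \<in> {a..<b} \<and>
     (\<forall>m\<le>n. \<theta> * ((b - a) / 2 ^ m) < measure lebesgue (F \<inter> dyadic_cell a b m x) \<longleftrightarrow> m = n)}"

lemma cz_cells_subset: "Q \<in> cz_cells a b \<theta> F \<Longrightarrow> Q \<subseteq> {a..<b}"
  unfolding cz_cells_def using dyadic_cell_subset by blast

lemma cz_cells_in_sets: "a < b \<Longrightarrow> Q \<in> cz_cells a b \<theta> F \<Longrightarrow> Q \<in> sets lebesgue"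
  using dyadic_cell_in_sets by (auto simp: cz_cells_def)

lemma cz_cell_is_interval:
  assumes "a < b" "Q \<in> cz_cells a b \<theta> F"
  obtains l r where "l < r" "Q = {l..<r}"
proof -
  obtain n x where Q: "Q = dyadic_cell a b n x"
    using assms(2) by (auto simp: cz_cells_def)
  define l where "l = a + of_int \<lfloor>(x - a) / ((b - a) / 2 ^ n)\<rfloor> * ((b - a) / 2 ^ n)"
  have "Q = {l..<l + (b - a) / 2 ^ n}"
    unfolding l_def Q by (rule dyadic_cell_eq_interval[OF assms(1)])
  moreover have "l < l + (b - a) / 2 ^ n"
    using assms(1) by simp
  ultimately show ?thesis
    using that by blast
qed

lemma countable_cz_cells:
  assumes "a < b"
  shows "countable (cz_cells a b \<theta> F)"
proof (rule countable_subset)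
  show "cz_cells a b \<theta> F \<subseteq> (\<Union>n. dyadic_cell a b n ` {a..<b})"
    unfolding cz_cells_def by blast
  show "countable (\<Union>n. dyadic_cell a b n ` {a..<b})"
    by (rule countable_UN) (auto intro: countable_finite finite_dyadic_cells[OF assms])
qed

lemma disjoint_cz_cells: "disjoint (cz_cells a b \<theta> F)"
proof (rule disjointI)
  define dense where "dense m z \<longleftrightarrow> \<theta> * ((b - a) / 2 ^ m) < measure lebesgue (F \<inter> dyadic_cell a b m z)"
    for m z
  fix Q Q' assume "Q \<in> cz_cells a b \<theta> F" "Q' \<in> cz_cells a b \<theta> F" "Q \<noteq> Q'"
  then obtain n x n' x' where Q: "Q = dyadic_cell a b n x" "\<And>m. m \<le> n \<Longrightarrow> dense m x \<longleftrightarrow> m = n"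
    and Q': "Q' = dyadic_cell a b n' x'" "\<And>m. m \<le> n' \<Longrightarrow> dense m x' \<longleftrightarrow> m = n'"
    by (auto simp: cz_cells_def dense_def)
  show "Q \<inter> Q' = {}"
  proof (rule ccontr)
    assume "Q \<inter> Q' \<noteq> {}"
    then obtain z where z: "z \<in> dyadic_cell a b n x" "z \<in> dyadic_cell a b n' x'"
      using Q Q' by blast
    have same: "dyadic_cell a b m x = dyadic_cell a b m x'" if "m \<le> n" "m \<le> n'" for m
    proof -
      have "z \<in> dyadic_cell a b m x" "z \<in> dyadic_cell a b m x'"
        using dyadic_cell_mono[OF that(1), of a b x] dyadic_cell_mono[OF that(2), of a b x'] z
        by (meson subsetD)+
      then show ?thesis
        by (metis dyadic_cell_cong)
    qed
    have "n = n'"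
    proof (rule ccontr)
      assume "n \<noteq> n'"
      then have "min n n' \<le> n" "min n n' \<le> n'" "min n n' \<noteq> n \<or> min n n' \<noteq> n'"
        by auto
      moreover have "dense (min n n') x \<longleftrightarrow> dense (min n n') x'"
        using same[of "min n n'"] by (simp add: dense_def)
      ultimately show False
        using Q(2)[of "min n n'"] Q'(2)[of "min n n'"] by (auto simp: min_def split: if_splits)
    qed
    then show False
      using same[of n] Q Q' \<open>Q \<noteq> Q'\<close> by simp
  qed
qed

lemma measure_dyadic_cell:
  assumes "a < b"
  shows "measure lebesgue (dyadic_cell a b n x) = (b - a) / 2 ^ n"
  unfolding measure_def emeasure_dyadic_cell[OF assms] using assms by simp

lemma cz_cells_density:
  assumes "a < b" "F \<in> sets lebesgue" "F \<subseteq> {a..<b}" "measure lebesgue F \<le> \<theta> * (b - a)"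
    and "Q \<in> cz_cells a b \<theta> F"
  shows "\<theta> * measure lebesgue Q < measure lebesgue (F \<inter> Q)"
    and "measure lebesgue (F \<inter> Q) \<le> 2 * \<theta> * measure lebesgue Q"
proof -
  obtain n x where Q: "Q = dyadic_cell a b n x"
    and first: "\<And>m. m \<le> n \<Longrightarrow>
      \<theta> * ((b - a) / 2 ^ m) < measure lebesgue (F \<inter> dyadic_cell a b m x) \<longleftrightarrow> m = n"
    using assms(5) by (auto simp: cz_cells_def)
  show "\<theta> * measure lebesgue Q < measure lebesgue (F \<inter> Q)"
    using first[of n] assms(1) by (simp add: Q measure_dyadic_cell)
  have "F \<in> lmeasurable"
    using assms(2,3) by (intro lmeasurable_subset_interval[of _ a b]) auto
  then have mono: "measure lebesgue (F \<inter> dyadic_cell a b k x) \<le> measure lebesgue (F \<inter> dyadic_cell a b m x)"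
    if "m \<le> k" for m k
    using dyadic_cell_mono[OF that] assms(1)
    by (intro measure_mono_fmeasurable fmeasurable_Int_fmeasurable) auto
  obtain m where n: "n = Suc m"
  proof (cases n)
    case 0
    have "measure lebesgue (F \<inter> dyadic_cell a b 0 x) \<le> measure lebesgue F"
      using \<open>F \<in> lmeasurable\<close> assms(1) by (intro measure_mono_fmeasurable) auto
    then show ?thesis
      using first[of 0] assms(4) 0 by simp
  qed
  then have "measure lebesgue (F \<inter> dyadic_cell a b m x) \<le> \<theta> * ((b - a) / 2 ^ m)"
    using first[of m] by simp
  also have "\<dots> = 2 * \<theta> * measure lebesgue Q"
    using assms(1) by (simp add: Q n measure_dyadic_cell)
  finally show "measure lebesgue (F \<inter> Q) \<le> 2 * \<theta> * measure lebesgue Q"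
    using mono[of m n] n Q by simp
qed

lemma cz_cells_cover:
  assumes "a < b" "\<theta> < 1" "openin (top_of_set {a..<b}) F"
  shows "F \<subseteq> \<Union>(cz_cells a b \<theta> F)"
proof
  fix x assume "x \<in> F"
  define dense where "dense m \<longleftrightarrow> \<theta> * ((b - a) / 2 ^ m) < measure lebesgue (F \<inter> dyadic_cell a b m x)"
    for m
  have "F \<subseteq> {a..<b} \<and> (\<forall>x\<in>F. \<exists>e>0. \<forall>y\<in>{a..<b}. dist y x < e \<longrightarrow> y \<in> F)"
    using assms(3) unfolding openin_euclidean_subtopology_iff .
  then have "x \<in> {a..<b}" and "\<exists>e>0. \<forall>y\<in>{a..<b}. dist y x < e \<longrightarrow> y \<in> F"
    using \<open>x \<in> F\<close> by blast+
  then obtain e where "0 < e" and e: "\<And>y. y \<in> {a..<b} \<Longrightarrow> dist y x < e \<Longrightarrow> y \<in> F"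
    by blast
  obtain n where "(b - a) / e < 2 ^ n"
    using real_arch_pow[of 2 "(b - a) / e"] by auto
  then have "(b - a) / 2 ^ n < e"
    using \<open>0 < e\<close> by (simp add: field_simps)
  have "dyadic_cell a b n x \<subseteq> F"
  proof
    fix y assume y: "y \<in> dyadic_cell a b n x"
    have "y \<in> {a..<b}"
      using dyadic_cell_subset[OF \<open>x \<in> {a..<b}\<close>] y by blast
    moreover have "dist y x < e"
      using dyadic_cell_dist[OF assms(1) y] \<open>(b - a) / 2 ^ n < e\<close> by (simp add: dist_real_def)
    ultimately show "y \<in> F"
      by (rule e)
  qed
  then have full: "F \<inter> dyadic_cell a b n x = dyadic_cell a b n x"
    by blast
  have "\<theta> * ((b - a) / 2 ^ n) < 1 * ((b - a) / 2 ^ n)"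
    using assms(1,2) by (intro mult_strict_right_mono) auto
  then have "dense n"
    unfolding dense_def full measure_dyadic_cell[OF assms(1)] by simp
  define k where "k = (LEAST k. dense k)"
  have "dense k"
    unfolding k_def using \<open>dense n\<close> by (rule LeastI)
  moreover have "\<not> dense m" if "m < k" for m
    using not_less_Least[OF that[unfolded k_def]] .
  ultimately have "\<forall>m\<le>k. dense m \<longleftrightarrow> m = k"
    using le_neq_implies_less by blast
  then have "dyadic_cell a b k x \<in> cz_cells a b \<theta> F"
    using \<open>x \<in> {a..<b}\<close> unfolding cz_cells_def dense_def by blast
  then show "x \<in> \<Union>(cz_cells a b \<theta> F)"
    by (meson UnionI mem_dyadic_cell)
qed

lemma relatively_open_superset:
  fixes E :: "real set"
  assumes "E \<in> sets lebesgue" "E \<subseteq> {a..b}" "emeasure lebesgue E < ennreal c"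
  obtains F where "openin (top_of_set {a..<b}) F" "E \<subseteq> F \<union> {b}" "measure lebesgue F < c"
proof -
  have "E \<in> lmeasurable"
    using assms(1,2) by (rule lmeasurable_subset_interval)
  then have "measure lebesgue E < c"
    using assms(3) by (simp add: emeasure_eq_measure2 ennreal_less_iff)
  then have "0 < c - measure lebesgue E"
    by simp
  then obtain T where T: "open T" "E \<subseteq> T" "T - E \<in> lmeasurable"
    "emeasure lebesgue (T - E) < ennreal (c - measure lebesgue E)"
    by (rule sets_lebesgue_outer_open[OF assms(1)])
  define F where "F = {a..<b} \<inter> T"
  have "F \<in> lmeasurable"
    using T(1) by (intro lmeasurable_subset_interval[of _ a b]) (auto simp: F_def borel_open)
  have "emeasure lebesgue F \<le> emeasure lebesgue (E \<union> (T - E))"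
    using T(1) assms(1) by (intro emeasure_mono) (auto simp: F_def borel_open)
  also have "\<dots> \<le> emeasure lebesgue E + emeasure lebesgue (T - E)"
    using T(1) assms(1) by (intro emeasure_subadditive) (auto simp: borel_open)
  also have "\<dots> < ennreal (measure lebesgue E) + ennreal (c - measure lebesgue E)"
    using T(4) \<open>E \<in> lmeasurable\<close> by (simp add: emeasure_eq_measure2 ennreal_add_left_cancel_less del: ennreal_plus)
  also have "\<dots> = ennreal c"
    using \<open>measure lebesgue E < c\<close> by (subst ennreal_plus[symmetric]) auto
  finally have "measure lebesgue F < c"
    using \<open>F \<in> lmeasurable\<close> by (simp add: emeasure_eq_measure2 ennreal_less_iff)
  moreover have "openin (top_of_set {a..<b}) F" "E \<subseteq> F \<union> {b}"
    using T(1,2) assms(2) by (auto simp: F_def)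
  ultimately show ?thesis
    using that by blast
qed

section \<open>Iterating the halving condition\<close>

locale small_sets_halving =
  fixes N :: "real measure" and \<theta> :: real
  assumes sets_N: "sets N = sets lebesgue" and \<theta>: "0 < \<theta>" "\<theta> < 1"
    and halving: "\<And>a b S. a < b \<Longrightarrow> S \<in> sets lebesgue \<Longrightarrow> S \<subseteq> {a..b} \<Longrightarrow>
      emeasure lebesgue S \<le> ennreal (2 * \<theta> * (b - a)) \<Longrightarrow> 2 * emeasure N S \<le> emeasure N {a..b}"
    and points: "\<And>x. emeasure N {x} = 0"
begin

lemma emeasure_mono_up_to_point:
  assumes "E \<subseteq> F \<union> {c}" "F \<in> sets lebesgue"
  shows "emeasure N E \<le> emeasure N F"
proof -
  have "F \<union> {c} \<in> sets lebesgue"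
    using assms(2) by (intro sets.Un) auto
  then have "emeasure N E \<le> emeasure N (F \<union> {c})"
    using assms(1) sets_N by (intro emeasure_mono) auto
  also have "\<dots> \<le> emeasure N F + emeasure N {c}"
    using assms(2) sets_N by (intro emeasure_subadditive) auto
  finally show ?thesis
    using points by simp
qed

lemma halving_half_open:
  assumes "l < r" "S \<in> sets lebesgue" "S \<subseteq> {l..<r}" "measure lebesgue S \<le> 2 * \<theta> * (r - l)"
  shows "2 * emeasure N S \<le> emeasure N {l..<r}"
proof -
  have "S \<in> lmeasurable"
    using assms(2,3) by (intro lmeasurable_subset_interval[of _ l r]) auto
  then have "2 * emeasure N S \<le> emeasure N {l..r}"
    using assms by (intro halving) (auto simp: emeasure_eq_measure2 ennreal_leI)
  also have "\<dots> \<le> emeasure N {l..<r}"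
    by (rule emeasure_mono_up_to_point[of _ _ r]) auto
  finally show ?thesis .
qed

lemma halving_on_cz_cover:
  assumes "a < b" "openin (top_of_set {a..<b}) F" "measure lebesgue F \<le> \<theta> * (b - a)"
  obtains \<Omega> where "\<Omega> \<in> sets lebesgue" "\<Omega> \<subseteq> {a..<b}" "2 * emeasure N F \<le> emeasure N \<Omega>"
    "ennreal \<theta> * emeasure lebesgue \<Omega> \<le> emeasure lebesgue F"
proof
  define \<Q> where "\<Q> = cz_cells a b \<theta> F"
  have F: "F \<in> sets lebesgue" "F \<subseteq> {a..<b}"
    using assms(2) by (auto simp: openin_open)
  have "countable \<Q>" "disjoint \<Q>" "\<Q> \<subseteq> sets lebesgue"
    using countable_cz_cells[OF assms(1)] disjoint_cz_cells cz_cells_in_sets[OF assms(1)]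
    by (auto simp: \<Q>_def)
  have "F \<inter> \<Union>\<Q> = F"
    using cz_cells_cover[OF assms(1) \<theta>(2) assms(2)] by (auto simp: \<Q>_def)
  have cell: "Q \<subseteq> {a..<b}" "Q \<in> sets lebesgue"
    "\<theta> * measure lebesgue Q < measure lebesgue (F \<inter> Q)"
    "measure lebesgue (F \<inter> Q) \<le> 2 * \<theta> * measure lebesgue Q" if "Q \<in> \<Q>" for Q
    using that cz_cells_subset[of Q a b \<theta> F] cz_cells_in_sets[OF assms(1), of Q \<theta> F]
      cz_cells_density[OF assms(1) F assms(3)] by (auto simp: \<Q>_def)
  show "\<Union>\<Q> \<in> sets lebesgue"
    using \<open>countable \<Q>\<close> \<open>\<Q> \<subseteq> sets lebesgue\<close> by (intro sets.countable_Union) auto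
  show "\<Union>\<Q> \<subseteq> {a..<b}"
    using cell(1) by blast
  have "2 * emeasure N (F \<inter> Q) \<le> emeasure N (UNIV \<inter> Q)" if Q: "Q \<in> \<Q>" for Q
  proof -
    obtain l r where "l < r" "Q = {l..<r}"
      using cz_cell_is_interval[OF assms(1)] Q unfolding \<Q>_def by blast
    moreover have "F \<inter> Q \<in> sets lebesgue"
      using F(1) cell(2)[OF Q] by auto
    ultimately show ?thesis
      using halving_half_open[of l r "F \<inter> Q"] cell(4)[OF Q] by auto
  qed
  then have "2 * emeasure N (F \<inter> \<Union>\<Q>) \<le> emeasure N (UNIV \<inter> \<Union>\<Q>)"
    using \<open>countable \<Q>\<close> \<open>disjoint \<Q>\<close> \<open>\<Q> \<subseteq> sets lebesgue\<close> F(1) sets_N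
    by (intro emeasure_Union_scaled_le) auto
  then show "2 * emeasure N F \<le> emeasure N (\<Union>\<Q>)"
    using \<open>F \<inter> \<Union>\<Q> = F\<close> by simp
  have "ennreal \<theta> * emeasure lebesgue (UNIV \<inter> Q) \<le> emeasure lebesgue (F \<inter> Q)" if "Q \<in> \<Q>" for Q
  proof -
    have "Q \<subseteq> {a..b}"
      using cell(1)[OF that] by auto
    then have "Q \<in> lmeasurable" "F \<inter> Q \<in> lmeasurable"
      using cell(2)[OF that] F(1) by (auto intro: lmeasurable_subset_interval)
    then show ?thesis
      using cell(3)[OF that] \<theta>(1) by (simp add: emeasure_eq_measure2 ennreal_mult[symmetric] ennreal_leI)
  qed
  then have "ennreal \<theta> * emeasure lebesgue (UNIV \<inter> \<Union>\<Q>) \<le> emeasure lebesgue (F \<inter> \<Union>\<Q>)"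
    using \<open>countable \<Q>\<close> \<open>disjoint \<Q>\<close> \<open>\<Q> \<subseteq> sets lebesgue\<close> F(1)
    by (intro emeasure_Union_scaled_le) auto
  then show "ennreal \<theta> * emeasure lebesgue (\<Union>\<Q>) \<le> emeasure lebesgue F"
    using \<open>F \<inter> \<Union>\<Q> = F\<close> by simp
qed

(* Cover E by a relatively open F and F by its Calderon-Zygmund cells: their union has at least
   twice the N-mass of E and at most 1 / theta times the length of F. *)
lemma halving_step:
  assumes "a < b" "E \<in> sets lebesgue" "E \<subseteq> {a..b}" "emeasure lebesgue E < ennreal (\<theta> ^ Suc k * (b - a))"
  obtains \<Omega> where "\<Omega> \<in> sets lebesgue" "\<Omega> \<subseteq> {a..b}" "emeasure lebesgue \<Omega> < ennreal (\<theta> ^ k * (b - a))"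
    "2 * emeasure N E \<le> emeasure N \<Omega>"
proof -
  obtain F where F: "openin (top_of_set {a..<b}) F" "E \<subseteq> F \<union> {b}"
    and "measure lebesgue F < \<theta> * (\<theta> ^ k * (b - a))"
    using relatively_open_superset[OF assms(2,3,4)] by (auto simp: mult.assoc)
  moreover have "\<theta> ^ k \<le> 1"
    using \<theta> by (simp add: power_le_one)
  then have "\<theta> * (\<theta> ^ k * (b - a)) \<le> \<theta> * (b - a)"
    using \<theta>(1) assms(1) by (intro mult_left_mono mult_left_le_one_le) auto
  ultimately have "measure lebesgue F \<le> \<theta> * (b - a)"
    by linarith
  then obtain \<Omega> where \<Omega>: "\<Omega> \<in> sets lebesgue" "\<Omega> \<subseteq> {a..<b}"
      "2 * emeasure N F \<le> emeasure N \<Omega>" "ennreal \<theta> * emeasure lebesgue \<Omega> \<le> emeasure lebesgue F"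
    using halving_on_cz_cover[OF assms(1) F(1)] by blast
  have "F \<in> sets lebesgue"
    using F(1) by (auto simp: openin_open borel_open)
  have "\<Omega> \<in> lmeasurable" "F \<in> lmeasurable"
    using \<Omega>(1,2) \<open>F \<in> sets lebesgue\<close> F(1)
    by (auto intro!: lmeasurable_subset_interval[of _ a b] simp: openin_open)
  then have "\<theta> * measure lebesgue \<Omega> \<le> measure lebesgue F"
    using \<Omega>(4) \<theta>(1) by (simp add: emeasure_eq_measure2 ennreal_mult[symmetric])
  then have "\<theta> * measure lebesgue \<Omega> < \<theta> * (\<theta> ^ k * (b - a))"
    using \<open>measure lebesgue F < \<theta> * (\<theta> ^ k * (b - a))\<close> by linarith
  then have "measure lebesgue \<Omega> < \<theta> ^ k * (b - a)"
    using \<theta>(1) by simp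
  then have "emeasure lebesgue \<Omega> < ennreal (\<theta> ^ k * (b - a))"
    using \<open>\<Omega> \<in> lmeasurable\<close> \<theta>(1) assms(1) by (simp add: emeasure_eq_measure2 ennreal_lessI)
  moreover have "emeasure N E \<le> emeasure N F"
    using F(2) \<open>F \<in> sets lebesgue\<close> by (rule emeasure_mono_up_to_point)
  then have "2 * emeasure N E \<le> 2 * emeasure N F"
    by (intro mult_left_mono) auto
  then have "2 * emeasure N E \<le> emeasure N \<Omega>"
    using \<Omega>(3) by (rule order_trans)
  moreover have "\<Omega> \<subseteq> {a..b}"
    using \<Omega>(2) by auto
  ultimately show ?thesis
    using that \<Omega>(1) by blast
qed

lemma geometric_decay:
  "a < b \<Longrightarrow> E \<in> sets lebesgue \<Longrightarrow> E \<subseteq> {a..b} \<Longrightarrow>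
    emeasure lebesgue E < ennreal (\<theta> ^ k * (b - a)) \<Longrightarrow> 2 ^ k * emeasure N E \<le> emeasure N {a..b}"
proof (induction k arbitrary: E)
  case 0
  then show ?case
    using sets_N by (simp add: emeasure_mono)
next
  case (Suc k)
  obtain \<Omega> where \<Omega>: "\<Omega> \<in> sets lebesgue" "\<Omega> \<subseteq> {a..b}" "emeasure lebesgue \<Omega> < ennreal (\<theta> ^ k * (b - a))"
    and "2 * emeasure N E \<le> emeasure N \<Omega>"
    using halving_step[OF Suc.prems] by blast
  then have "2 ^ k * (2 * emeasure N E) \<le> 2 ^ k * emeasure N \<Omega>"
    by (intro mult_left_mono) auto
  also have "\<dots> \<le> emeasure N {a..b}"
    using Suc.IH[OF Suc.prems(1) \<Omega>] .
  finally show ?case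
    by (simp add: mult_ac)
qed

end

lemma le_powr_if_geometric_decay:
  fixes r x \<theta> :: real
  assumes "0 < \<theta>" "\<theta> < 1" "r \<le> 1" "0 \<le> x" and decay: "\<And>k. x < \<theta> ^ k \<Longrightarrow> 2 ^ k * r \<le> 1"
  shows "r \<le> 2 * x powr (ln 2 / ln (1 / \<theta>))"
proof -
  define \<delta> where "\<delta> = ln 2 / ln (1 / \<theta>)"
  have "0 < \<delta>"
    using assms(1,2) by (simp add: \<delta>_def)
  have half: "(\<theta> ^ k) powr \<delta> = (1 / 2) ^ k" for k
    unfolding \<delta>_def using assms(1,2) by (rule powr_halving_exponent)
  consider "\<theta> \<le> x" | "x = 0" | "0 < x" "x < \<theta>"
    using assms(4) by linarith
  then show ?thesis
  proof cases
    case 1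
    have "r \<le> 2 * \<theta> powr \<delta>"
      using half[of 1] assms(3) by simp
    also have "\<dots> \<le> 2 * x powr \<delta>"
      using 1 assms(1) \<open>0 < \<delta>\<close> by (simp add: powr_mono2)
    finally show ?thesis
      by (simp add: \<delta>_def)
  next
    case 2
    have "r \<le> 0"
    proof (rule ccontr)
      assume "\<not> r \<le> 0"
      then obtain k where "1 / r < 2 ^ k"
        using real_arch_pow[of 2 "1 / r"] by auto
      moreover have "2 ^ k * r \<le> 1"
        using decay 2 assms(1) by simp
      ultimately show False
        using \<open>\<not> r \<le> 0\<close> by (simp add: field_simps)
    qed
    then show ?thesis
      using 2 by simp
  next
    case 3
    then obtain k where k: "\<theta> ^ Suc k \<le> x" "x < \<theta> ^ k"
      using power_bracket[OF assms(1,2), of x] assms(2) by auto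
    have "r \<le> (1 / 2) ^ k"
      using decay[OF k(2)] by (simp add: field_simps)
    also have "\<dots> = 2 * (\<theta> ^ Suc k) powr \<delta>"
      unfolding half by simp
    also have "\<dots> \<le> 2 * x powr \<delta>"
      using k(1) assms(1) \<open>0 < \<delta>\<close> by (simp add: powr_mono2)
    finally show ?thesis
      by (simp add: \<delta>_def)
  qed
qed

lemma A_infty_if_geometric_decay:
  assumes "weight_R u" "0 < \<theta>" "\<theta> < 1 / 2"
    and decay: "\<And>k a b E. a < b \<Longrightarrow> E \<in> sets lebesgue \<Longrightarrow> E \<subseteq> {a..b} \<Longrightarrow>
      measure lebesgue E < \<theta> ^ k * (b - a) \<Longrightarrow> 2 ^ k * umeas u E \<le> umeas u {a..b}"
  shows "A_infty u"
proof -
  define \<delta> where "\<delta> = ln 2 / ln (1 / \<theta>)"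
  have "ln 2 < ln (1 / \<theta>)"
    using assms(2,3) by (simp add: field_simps)
  then have "0 < \<delta>" "\<delta> < 1"
    using assms(2,3) by (simp_all add: \<delta>_def)
  have "umeas u E / umeas u {a..b} \<le> 2 * (measure lebesgue E / (b - a)) powr \<delta>"
    if ab: "a < b" and E: "E \<in> sets lebesgue" "E \<subseteq> {a..b}" for a b E
    unfolding \<delta>_def
  proof (rule le_powr_if_geometric_decay)
    have "0 < umeas u {a..b}"
      using assms(1) ab by (rule umeas_interval_pos)
    then show "umeas u E / umeas u {a..b} \<le> 1"
      using umeas_mono[OF assms(1) E(1) _ E(2) order_refl] by simp
    show "0 \<le> measure lebesgue E / (b - a)"
      using ab by simp
    fix k assume "measure lebesgue E / (b - a) < \<theta> ^ k"
    then have "2 ^ k * umeas u E \<le> umeas u {a..b}"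
      using decay[OF ab E] ab by (simp add: field_simps)
    then show "2 ^ k * (umeas u E / umeas u {a..b}) \<le> 1"
      using \<open>0 < umeas u {a..b}\<close> by (simp add: field_simps)
  qed (use assms(2,3) in auto)
  then show ?thesis
    unfolding A_infty_def using \<open>0 < \<delta>\<close> \<open>\<delta> < 1\<close> zero_less_numeral by blast
qed

lemma A_infty_if_small_sets_bound_half:
  assumes "weight_R u" "0 < \<eta>" "\<eta> < 1" and bound: "small_sets_bound (\<lambda>t. t) u \<eta> (1 / 2)"
  shows "A_infty u"
proof -
  define \<theta> where "\<theta> = \<eta> / 2"
  have N: "emeasure (weight_measure u) S = ennreal (umeas u S)" if "S \<in> sets lebesgue" "S \<subseteq> {a..b}" for S a b
    using emeasure_weight_measure[OF assms(1) that] .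
  interpret small_sets_halving "weight_measure u" \<theta>
  proof
    show "0 < \<theta>" "\<theta> < 1"
      using assms(2,3) by (simp_all add: \<theta>_def)
    show "emeasure (weight_measure u) {x} = 0" for x
      using N[of "{x}" x x] umeas_null[OF assms(1), of "{x}"] by simp
    fix a b S assume ab: "a < b" and S: "S \<in> sets lebesgue" "S \<subseteq> {a..b}"
      and small: "emeasure lebesgue S \<le> ennreal (2 * \<theta> * (b - a))"
    have "measure lebesgue S \<le> \<eta> * (b - a)"
      using small lmeasurable_subset_interval[OF S] ab assms(2) by (simp add: emeasure_eq_measure2 \<theta>_def)
    then have "ennreal (2 * umeas u S) \<le> ennreal (umeas u {a..b})"
      using small_sets_boundD[OF bound ab S] by (intro ennreal_leI) simp
    then show "2 * emeasure (weight_measure u) S \<le> emeasure (weight_measure u) {a..b}"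
      using N[OF S] N[of "{a..b}" a b] umeas_nonneg[OF assms(1)] by (simp add: ennreal_mult)
  qed simp
  show ?thesis
  proof (rule A_infty_if_geometric_decay[OF assms(1)])
    show "0 < \<theta>" "\<theta> < 1 / 2"
      using assms(2,3) by (simp_all add: \<theta>_def)
    fix k a b E assume ab: "a < b" and E: "E \<in> sets lebesgue" "E \<subseteq> {a..b}"
      and "measure lebesgue E < \<theta> ^ k * (b - a)"
    then have "emeasure lebesgue E < ennreal (\<theta> ^ k * (b - a))"
      using lmeasurable_subset_interval[OF E] \<theta>(1) by (simp add: emeasure_eq_measure2 ennreal_lessI)
    then have "ennreal (2 ^ k * umeas u E) \<le> ennreal (umeas u {a..b})"
      using geometric_decay[OF ab E] N[OF E] N[of "{a..b}" a b] umeas_nonneg[OF assms(1)]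
      by (simp add: ennreal_mult ennreal_power[symmetric])
    then show "2 ^ k * umeas u E \<le> umeas u {a..b}"
      using umeas_interval_pos[OF assms(1) ab] by (simp add: ennreal_le_iff)
  qed
qed

lemma small_sets_bound_Wfun_if_A_infty_B_star_infty:
  assumes "weight_R u" "weight_pos w" "A_infty u" "B_star_infty w" "0 < \<epsilon>"
  obtains \<eta> where "0 < \<eta>" "\<eta> < 1" "small_sets_bound (Wfun w) u \<eta> \<epsilon>"
proof -
  obtain \<rho> where "0 < \<rho>" and \<rho>: "\<And>r. 0 < r \<Longrightarrow> Wfun w (\<rho> * r) \<le> \<epsilon> * Wfun w r"
    using B_star_infty_Wfun_small_fraction[OF assms(2,4,5)] by blast
  obtain \<eta> where "0 < \<eta>" "\<eta> < 1" and \<eta>: "small_sets_bound (\<lambda>t. t) u \<eta> \<rho>"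
    using A_infty_imp_small_sets_bound[OF assms(1,3) \<open>0 < \<rho>\<close>] by blast
  have "small_sets_bound (Wfun w) u \<eta> \<epsilon>"
    unfolding small_sets_bound_def
  proof (intro allI impI)
    fix a b S assume ab: "a < b" and S: "S \<in> sets lebesgue" "S \<subseteq> {a..b}"
      and small: "measure lebesgue S \<le> \<eta> * (b - a)"
    have "Wfun w (umeas u S) \<le> Wfun w (\<rho> * umeas u {a..b})"
      using small_sets_boundD[OF \<eta> ab S small] by (intro Wfun_mono[OF assms(2)]) simp
    also have "\<dots> \<le> \<epsilon> * Wfun w (umeas u {a..b})"
      using \<rho> umeas_interval_pos[OF assms(1) ab] by blast
    finally show "Wfun w (umeas u S) \<le> \<epsilon> * Wfun w (umeas u {a..b})" .
  qed
  then show ?thesis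
    using that \<open>0 < \<eta>\<close> \<open>\<eta> < 1\<close> by blast
qed

lemma A_infty_if_small_sets_bound_Wfun:
  assumes "weight_R u" "weight_pos w" "\<not> set_integrable lebesgue {0<..} w" "Delta2 w"
    and bound: "\<forall>\<epsilon>>0. \<exists>\<eta>. 0 < \<eta> \<and> \<eta> < 1 \<and> small_sets_bound (Wfun w) u \<eta> \<epsilon>"
  shows "A_infty u"
proof -
  obtain D where "0 < D" and doubling: "\<And>r. 0 < r \<Longrightarrow> Wfun w (2 * r) \<le> D * Wfun w r"
    using Delta2_pos_constant[OF assms(2-4)] by blast
  then obtain \<eta> where "0 < \<eta>" "\<eta> < 1" "small_sets_bound (Wfun w) u \<eta> (1 / (2 * D))"
    using bound[rule_format, of "1 / (2 * D)"] by auto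
  then show ?thesis
    using small_sets_bound_half_if_doubling[OF assms(1,2) \<open>0 < D\<close> doubling Wfun_pos[OF assms(2-4)]]
      A_infty_if_small_sets_bound_half[OF assms(1)] by blast
qed

lemma B_star_infty_if_small_sets_bound_Wfun:
  assumes "weight_R u" "\<not> integrable lebesgue u" "weight_pos w" "0 < \<eta>" "\<eta> < 1"
    and "small_sets_bound (Wfun w) u \<eta> (1 / 2)"
  shows "B_star_infty w"
proof -
  obtain \<theta> where \<theta>: "0 < \<theta>" "\<theta> < 1" and halving: "\<And>t. 0 < t \<Longrightarrow> Wfun w (\<theta> * t) \<le> Wfun w t / 2"
    using Wfun_halving_if_small_sets_bound[OF assms] by blast
  have "0 < ln 2 / ln (1 / \<theta>)"
    using \<theta> by simp
  then show ?thesis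
    using Wfun_power_bound_if_halving[OF assms(3) \<theta> halving]
    by (intro B_star_infty_if_power_bound[OF assms(3), where C = 2]) auto
qed

theorem proposition2p7:
  fixes u w :: "real \<Rightarrow> real"
  assumes "weight_R u" and "\<not> integrable lebesgue u"
    and "weight_pos w" and "\<not> set_integrable lebesgue {0<..} w" and "Delta2 w"
  shows "(A_infty u \<and> B_star_infty w) \<longleftrightarrow>
    (\<forall>\<epsilon>>0. \<exists>\<eta>. 0 < \<eta> \<and> \<eta> < 1 \<and>
       (\<forall>a b S. a < b \<longrightarrow> S \<in> sets lebesgue \<longrightarrow> S \<subseteq> {a..b} \<longrightarrow>
          measure lebesgue S \<le> \<eta> * (b - a) \<longrightarrow>
          Wfun w (umeas u S) \<le> \<epsilon> * Wfun w (umeas u {a..b})))"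
proof -
  have "(A_infty u \<and> B_star_infty w) \<longleftrightarrow>
    (\<forall>\<epsilon>>0. \<exists>\<eta>. 0 < \<eta> \<and> \<eta> < 1 \<and> small_sets_bound (Wfun w) u \<eta> \<epsilon>)" (is "_ \<longleftrightarrow> ?bound")
  proof
    assume "A_infty u \<and> B_star_infty w"
    then show ?bound
      using small_sets_bound_Wfun_if_A_infty_B_star_infty[OF assms(1,3)] by metis
  next
    assume ?bound
    moreover obtain \<eta> where "0 < \<eta>" "\<eta> < 1" "small_sets_bound (Wfun w) u \<eta> (1 / 2)"
      using \<open>?bound\<close> by (meson zero_less_divide_iff zero_less_numeral zero_less_one)
    ultimately show "A_infty u \<and> B_star_infty w"
      using A_infty_if_small_sets_bound_Wfun[OF assms(1,3-5)]
        B_star_infty_if_small_sets_bound_Wfun[OF assms(1-3)] by blast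
  qed
  then show ?thesis
    unfolding small_sets_bound_def .
qed

end
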